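(* Let $M$ be a bounded pointed metric space and let $X\subset \mathrm{Lip}_0(M)=\mathcal F(M)^*$ be an isometric predual of $\mathcal F(M)$ (i.e. $X^*=\mathcal F(M)$ isometrically via the natural duality). Then the following are equivalent: (i) there is a compact Hausdorff topology $\tau$ on $M$ such that $X\subset \mathrm{Lip}_0(M)\cap\mathcal C_\tau(M)$; (ii) $\delta(M)$ is $\sigma(\mathcal F(M),X)$-closed.
   Context: A pointed metric space $M$ has a distinguished origin $0$. $\mathrm{Lip}_0(M)$ is the Banach space of real Lipschitz functions on $M$ vanishing at $0$ with the best Lipschitz constant as norm; $\delta(x)$ is evaluation at $x$, and the Lipschitz free space $\mathcal F(M)$ is the closed linear span of $\delta(M)$ in $\mathrm{Lip}_0(M)^*$, with $\mathcal F(M)^*=\mathrm{Lip}_0(M)$. $\mathcal C_\tau(M)$ denotes the real functions on $M$ continuous for the topology $\tau$. $\sigma(\mathcal F(M),X)$ is the topology of pointwise convergence on elements of $X$. *)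

theory Defs
  imports "HOL-Analysis.Analysis"
begin

text \<open>The pointed metric space M is the whole type 'a (a metric space) with base point z.
  Lipschitz functions are functions 'a => real; functionals on Lip_0(M) are functions
  ('a => real) => real, normalised to be 0 outside Lip_0(M).\<close>

definition lip0 :: "'a::metric_space \<Rightarrow> ('a \<Rightarrow> real) set" where
  "lip0 z = {f. (\<exists>L. L-lipschitz_on UNIV f) \<and> f z = 0}"

definition lipnorm :: "('a::metric_space \<Rightarrow> real) \<Rightarrow> real" where
  "lipnorm f = Inf {L. L-lipschitz_on UNIV f}"

definition bdd_lin_on :: "('a::metric_space \<Rightarrow> real) set \<Rightarrow> (('a \<Rightarrow> real) \<Rightarrow> real) \<Rightarrow> bool" where
  "bdd_lin_on S \<phi> \<longleftrightarrow>
     (\<forall>f\<in>S. \<forall>g\<in>S. \<forall>a b. \<phi> (\<lambda>x. a * f x + b * g x) = a * \<phi> f + b * \<phi> g) \<and>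
     (\<exists>C. \<forall>f\<in>S. \<bar>\<phi> f\<bar> \<le> C * lipnorm f)"

definition dnorm_on :: "('a::metric_space \<Rightarrow> real) set \<Rightarrow> (('a \<Rightarrow> real) \<Rightarrow> real) \<Rightarrow> real" where
  "dnorm_on S \<phi> = Sup {\<bar>\<phi> f\<bar> | f. f \<in> S \<and> lipnorm f \<le> 1}"

definition lipdual :: "'a::metric_space \<Rightarrow> (('a \<Rightarrow> real) \<Rightarrow> real) set" where
  "lipdual z = {\<phi>. bdd_lin_on (lip0 z) \<phi> \<and> (\<forall>f. f \<notin> lip0 z \<longrightarrow> \<phi> f = 0)}"

definition dirac :: "'a::metric_space \<Rightarrow> 'a \<Rightarrow> (('a \<Rightarrow> real) \<Rightarrow> real)" where
  "dirac z x = (\<lambda>f. if f \<in> lip0 z then f x else 0)"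

definition free_space :: "'a::metric_space \<Rightarrow> (('a \<Rightarrow> real) \<Rightarrow> real) set" where
  "free_space z = {\<mu> \<in> lipdual z. \<forall>e>0. \<exists>(n::nat) (a::nat \<Rightarrow> real) (p::nat \<Rightarrow> 'a).
       dnorm_on (lip0 z) (\<lambda>f. \<mu> f - (\<Sum>i<n. a i * dirac z (p i) f)) < e}"

text \<open>X \<subseteq> Lip_0(M) is an isometric predual of F(M) via the natural duality:
  X is a closed linear subspace of Lip_0(M), restriction F(M) -> X^* is onto and isometric.\<close>
definition isometric_predual :: "'a::metric_space \<Rightarrow> ('a \<Rightarrow> real) set \<Rightarrow> bool" where
  "isometric_predual z X \<longleftrightarrow>
     X \<subseteq> lip0 z \<and> (\<lambda>x. 0) \<in> X \<and>
     (\<forall>f\<in>X. \<forall>g\<in>X. \<forall>a b. (\<lambda>x. a * f x + b * g x) \<in> X) \<and>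
     (\<forall>f\<in>lip0 z. (\<forall>e>0. \<exists>g\<in>X. lipnorm (\<lambda>x. f x - g x) < e) \<longrightarrow> f \<in> X) \<and>
     (\<forall>\<phi>. bdd_lin_on X \<phi> \<longrightarrow> (\<exists>\<mu>\<in>free_space z. \<forall>f\<in>X. \<mu> f = \<phi> f)) \<and>
     (\<forall>\<mu>\<in>free_space z. dnorm_on (lip0 z) \<mu> = dnorm_on X \<mu>)"

definition weak_top :: "'a::metric_space \<Rightarrow> ('a \<Rightarrow> real) set \<Rightarrow> (('a \<Rightarrow> real) \<Rightarrow> real) topology" where
  "weak_top z X = subtopology
     (topology_generated_by {{\<mu>. \<mu> f \<in> U} | f U. f \<in> X \<and> open U}) (free_space z)"

end

theory Submission
  imports Defs
begin

text \<open>
  (i) \<open>\<Longrightarrow>\<close> (ii): every \<open>f \<in> X\<close> is \<open>\<tau>\<close>-continuous, so \<open>\<delta>\<close> is continuous from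
  \<open>(M, \<tau>)\<close> to \<open>(\<F>(M), \<sigma>(\<F>(M), X))\<close> and \<open>\<delta>(M)\<close> is compact. The weak topology is
  Hausdorff because, the duality being isometric, \<open>X\<close> separates the points of \<open>\<F>(M)\<close>;
  hence \<open>\<delta>(M)\<close> is closed.

  (ii) \<open>\<Longrightarrow>\<close> (i): let \<open>\<tau>\<close> be the topology induced by \<open>X\<close>, i.e. the pullback of the
  product topology of \<open>\<real>\<^sup>X\<close> along the evaluation map \<open>x \<mapsto> (f x)\<close>, \<open>f \<in> X\<close>. Since \<open>M\<close>
  is bounded, the image of \<open>M\<close> lies in a product of compact intervals, and it is closed there:
  a point \<open>\<phi>\<close> of its closure is a bounded linear functional on \<open>X\<close>, hence the restriction
  of some \<open>\<mu> \<in> \<F>(M)\<close>, and weak closedness of \<open>\<delta>(M)\<close> forces \<open>\<mu> \<in> \<delta>(M)\<close>.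
\<close>

section \<open>The Lipschitz norm\<close>

lemma lipnorm_le: "L-lipschitz_on UNIV f \<Longrightarrow> lipnorm f \<le> L"
  unfolding lipnorm_def
  by (rule cInf_lower) (auto intro!: bdd_belowI[of _ 0] simp: lipschitz_on_def)

lemma lipnorm_nonneg: "f \<in> lip0 z \<Longrightarrow> 0 \<le> lipnorm f"
  unfolding lipnorm_def lip0_def by (rule cInf_greatest) (auto simp: lipschitz_on_def)

lemma lipschitz_on_lipnorm:
  assumes "f \<in> lip0 z"
  shows "(lipnorm f)-lipschitz_on UNIV f"
proof (rule lipschitz_onI[OF _ lipnorm_nonneg[OF assms]])
  fix x y :: 'a
  show "dist (f x) (f y) \<le> lipnorm f * dist x y"
  proof (cases "x = y")
    case False
    then have "dist (f x) (f y) / dist x y \<le> lipnorm f"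
      using assms unfolding lipnorm_def lip0_def
      by (intro cInf_greatest) (auto simp: divide_le_eq dest: lipschitz_onD)
    with False show ?thesis by (simp add: divide_le_eq mult.commute)
  qed simp
qed

lemma lip0_abs_le: "f \<in> lip0 z \<Longrightarrow> \<bar>f x\<bar> \<le> lipnorm f * dist x z"
  using lipschitz_onD[OF lipschitz_on_lipnorm, of f z x z] by (simp add: lip0_def dist_real_def)

lemma lip0_zero: "(\<lambda>x. 0) \<in> lip0 z"
  unfolding lip0_def by (auto intro: lipschitz_on_constant)

lemma lipnorm_zero: "lipnorm (\<lambda>x::'a::metric_space. 0::real) = 0"
  using lipnorm_le[OF lipschitz_on_constant] lipnorm_nonneg[OF lip0_zero] by (metis order_antisym)

lemma lip0_lin:
  assumes "f \<in> lip0 z" "g \<in> lip0 z"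
  shows "(\<lambda>x. a * f x + b * g x) \<in> lip0 z"
proof -
  have "(\<bar>a\<bar> * lipnorm f + \<bar>b\<bar> * lipnorm g)-lipschitz_on UNIV (\<lambda>x. a * f x + b * g x)"
    using assms by (intro lipschitz_on_add lipschitz_on_cmult_real lipschitz_on_lipnorm)
  with assms show ?thesis by (auto simp: lip0_def)
qed

lemma lipnorm_cmult_le: "f \<in> lip0 z \<Longrightarrow> lipnorm (\<lambda>x. c * f x) \<le> \<bar>c\<bar> * lipnorm f"
  by (intro lipnorm_le lipschitz_on_cmult_real lipschitz_on_lipnorm)

section \<open>Bounded functionals and the free space\<close>

lemma bdd_lin_on_bound:
  assumes "S \<subseteq> lip0 z" "bdd_lin_on S \<phi>"
  obtains C where "C \<ge> 0" "\<And>f. f \<in> S \<Longrightarrow> \<bar>\<phi> f\<bar> \<le> C * lipnorm f"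
proof -
  obtain C where C: "\<And>f. f \<in> S \<Longrightarrow> \<bar>\<phi> f\<bar> \<le> C * lipnorm f"
    using assms(2) unfolding bdd_lin_on_def by blast
  have "C * lipnorm f \<le> \<bar>C\<bar> * lipnorm f" if "f \<in> S" for f
    using assms(1) that by (intro mult_right_mono lipnorm_nonneg) auto
  with C show ?thesis by (intro that[of "\<bar>C\<bar>"]) (auto intro: order_trans)
qed

lemma bdd_lin_on_add:
  assumes S: "S \<subseteq> lip0 z" and \<phi>: "bdd_lin_on S \<phi>" and \<psi>: "bdd_lin_on S \<psi>"
  shows "bdd_lin_on S (\<lambda>f. \<phi> f + \<psi> f)"
proof -
  obtain C1 where C1: "\<And>f. f \<in> S \<Longrightarrow> \<bar>\<phi> f\<bar> \<le> C1 * lipnorm f"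
    using bdd_lin_on_bound[OF S \<phi>] by blast
  obtain C2 where C2: "\<And>f. f \<in> S \<Longrightarrow> \<bar>\<psi> f\<bar> \<le> C2 * lipnorm f"
    using bdd_lin_on_bound[OF S \<psi>] by blast
  show ?thesis unfolding bdd_lin_on_def
  proof (intro conjI ballI allI exI)
    fix f g a b assume "f \<in> S" "g \<in> S"
    with \<phi> \<psi> show "\<phi> (\<lambda>x. a * f x + b * g x) + \<psi> (\<lambda>x. a * f x + b * g x) =
        a * (\<phi> f + \<psi> f) + b * (\<phi> g + \<psi> g)"
      by (simp add: bdd_lin_on_def algebra_simps)
  next
    fix f assume "f \<in> S"
    then show "\<bar>\<phi> f + \<psi> f\<bar> \<le> (C1 + C2) * lipnorm f"
      using C1 C2 abs_triangle_ineq[of "\<phi> f" "\<psi> f"] by (fastforce simp: algebra_simps)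
  qed
qed

lemma bdd_lin_on_cmult:
  assumes S: "S \<subseteq> lip0 z" and \<phi>: "bdd_lin_on S \<phi>"
  shows "bdd_lin_on S (\<lambda>f. c * \<phi> f)"
proof -
  obtain C where C: "\<And>f. f \<in> S \<Longrightarrow> \<bar>\<phi> f\<bar> \<le> C * lipnorm f"
    using bdd_lin_on_bound[OF S \<phi>] by blast
  show ?thesis unfolding bdd_lin_on_def
  proof (intro conjI ballI allI exI)
    fix f g a b assume "f \<in> S" "g \<in> S"
    with \<phi> show "c * \<phi> (\<lambda>x. a * f x + b * g x) = a * (c * \<phi> f) + b * (c * \<phi> g)"
      by (simp add: bdd_lin_on_def algebra_simps)
  next
    fix f assume "f \<in> S"
    then show "\<bar>c * \<phi> f\<bar> \<le> (\<bar>c\<bar> * C) * lipnorm f"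
      using mult_left_mono[OF C, of f "\<bar>c\<bar>"] by (simp add: abs_mult mult.assoc)
  qed
qed

lemma bdd_lin_on_diff:
  assumes "S \<subseteq> lip0 z" "bdd_lin_on S \<phi>" "bdd_lin_on S \<psi>"
  shows "bdd_lin_on S (\<lambda>f. \<phi> f - \<psi> f)"
  using bdd_lin_on_add[OF assms(1,2) bdd_lin_on_cmult[OF assms(1,3), of "-1"]] by simp

lemma bdd_lin_on_dirac: "bdd_lin_on (lip0 z) (dirac z x)"
  unfolding bdd_lin_on_def
proof (intro conjI ballI allI exI)
  fix f g a b assume "f \<in> lip0 z" "g \<in> lip0 z"
  then show "dirac z x (\<lambda>x. a * f x + b * g x) = a * dirac z x f + b * dirac z x g"
    by (simp add: dirac_def lip0_lin)
next
  fix f assume "f \<in> lip0 z"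
  then show "\<bar>dirac z x f\<bar> \<le> dist x z * lipnorm f"
    using lip0_abs_le[of f z x] by (simp add: dirac_def mult.commute)
qed

lemma bdd_lin_on_dirac_sum: "bdd_lin_on (lip0 z) (\<lambda>f. \<Sum>i<(n::nat). a i * dirac z (p i) f)"
proof (induction n)
  case 0
  then show ?case by (auto simp: bdd_lin_on_def intro: exI[of _ 0])
next
  case (Suc n)
  show ?case
    using bdd_lin_on_add[OF subset_refl Suc bdd_lin_on_cmult[OF subset_refl bdd_lin_on_dirac]]
    by simp
qed

lemma dnorm_on_upper:
  assumes S: "S \<subseteq> lip0 z" and \<phi>: "bdd_lin_on S \<phi>" and f: "f \<in> S" "lipnorm f \<le> 1"
  shows "\<bar>\<phi> f\<bar> \<le> dnorm_on S \<phi>"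
proof -
  obtain C where C: "C \<ge> 0" "\<And>f. f \<in> S \<Longrightarrow> \<bar>\<phi> f\<bar> \<le> C * lipnorm f"
    using bdd_lin_on_bound[OF S \<phi>] by blast
  have "bdd_above {\<bar>\<phi> f\<bar> | f. f \<in> S \<and> lipnorm f \<le> 1}"
    using C mult_left_mono[of _ 1 C] by (intro bdd_aboveI[of _ C]) (force intro: order_trans)
  with f show ?thesis unfolding dnorm_on_def by (intro cSup_upper) auto
qed

lemma dnorm_on_diff_le:
  assumes "S \<subseteq> lip0 z" "(\<lambda>x. 0) \<in> S" "bdd_lin_on S \<phi>" "bdd_lin_on S \<psi>"
  shows "dnorm_on S (\<lambda>f. \<phi> f - \<psi> f) \<le> dnorm_on S \<phi> + dnorm_on S \<psi>"
  unfolding dnorm_on_def[of S "\<lambda>f. \<phi> f - \<psi> f"]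
proof (rule cSup_least)
  show "{\<bar>\<phi> f - \<psi> f\<bar> |f. f \<in> S \<and> lipnorm f \<le> 1} \<noteq> {}"
  proof -
    have "lipnorm (\<lambda>x::'a. 0::real) \<le> 1" by (simp add: lipnorm_zero)
    with assms(2) show ?thesis by blast
  qed
next
  fix y assume "y \<in> {\<bar>\<phi> f - \<psi> f\<bar> |f. f \<in> S \<and> lipnorm f \<le> 1}"
  then obtain f where f: "f \<in> S" "lipnorm f \<le> 1" and y: "y = \<bar>\<phi> f - \<psi> f\<bar>" by auto
  show "y \<le> dnorm_on S \<phi> + dnorm_on S \<psi>"
    using dnorm_on_upper[OF assms(1,3) f] dnorm_on_upper[OF assms(1,4) f] y
      abs_triangle_ineq4[of "\<phi> f" "\<psi> f"] by linarith
qed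

lemma dnorm_on_zero: "(\<lambda>x. 0) \<in> S \<Longrightarrow> dnorm_on S (\<lambda>f. 0) = 0"
  unfolding dnorm_on_def
  by (subgoal_tac "{\<bar>0::real\<bar> |f. f \<in> S \<and> lipnorm f \<le> 1} = {0}") (auto simp: lipnorm_zero)

lemma free_space_bdd_lin: "\<mu> \<in> free_space z \<Longrightarrow> bdd_lin_on (lip0 z) \<mu>"
  by (simp add: free_space_def lipdual_def)

lemma free_space_outside_lip0: "\<mu> \<in> free_space z \<Longrightarrow> f \<notin> lip0 z \<Longrightarrow> \<mu> f = 0"
  by (simp add: free_space_def lipdual_def)

lemma dirac_in_free_space: "dirac z x \<in> free_space z"
  unfolding free_space_def lipdual_def
proof (intro CollectI conjI allI impI bdd_lin_on_dirac)
  fix f :: "'a \<Rightarrow> real"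
  assume "f \<notin> lip0 z"
  then show "dirac z x f = 0" by (simp add: dirac_def)
next
  fix e :: real
  assume "e > 0"
  moreover have "(\<lambda>f. dirac z x f - (\<Sum>i<Suc 0. (\<lambda>_. 1) i * dirac z ((\<lambda>_. x) i) f)) = (\<lambda>f. 0)"
    by simp
  ultimately show "\<exists>(n::nat) a p. dnorm_on (lip0 z) (\<lambda>f. dirac z x f - (\<Sum>i<n. a i * dirac z (p i) f)) < e"
    using dnorm_on_zero[OF lip0_zero, of z]
    by (intro exI[of _ "Suc 0"] exI[of _ "\<lambda>_. 1"] exI[of _ "\<lambda>_. x"]) simp
qed

lemma sum_dirac_append:
  "(\<Sum>i<m + (n::nat). (if i < m then a i else - b (i - m)) *
      dirac z (if i < m then p i else q (i - m)) f)
   = (\<Sum>i<m. a i * dirac z (p i) f) - (\<Sum>i<n. b i * dirac z (q i) f)"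
  by (induction n) auto

lemma free_space_approx:
  assumes "\<mu> \<in> free_space z" "e > 0"
  obtains n a p where "dnorm_on (lip0 z) (\<lambda>f. \<mu> f - (\<Sum>i<(n::nat). a i * dirac z (p i) f)) < e"
  using assms unfolding free_space_def by blast

lemma free_space_diff:
  assumes \<mu>: "\<mu> \<in> free_space z" and \<nu>: "\<nu> \<in> free_space z"
  shows "(\<lambda>f. \<mu> f - \<nu> f) \<in> free_space z"
  unfolding free_space_def lipdual_def
proof (intro CollectI conjI allI impI)
  show "bdd_lin_on (lip0 z) (\<lambda>f. \<mu> f - \<nu> f)"
    by (rule bdd_lin_on_diff[OF subset_refl free_space_bdd_lin[OF \<mu>] free_space_bdd_lin[OF \<nu>]])
next
  fix f assume "f \<notin> lip0 z"
  then show "\<mu> f - \<nu> f = 0" using free_space_outside_lip0[OF \<mu>] free_space_outside_lip0[OF \<nu>] by simp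
next
  fix e :: real assume e: "e > 0"
  obtain m a p where a: "dnorm_on (lip0 z) (\<lambda>f. \<mu> f - (\<Sum>i<(m::nat). a i * dirac z (p i) f)) < e/2"
    using free_space_approx[OF \<mu> half_gt_zero[OF e]] by blast
  obtain n b q where b: "dnorm_on (lip0 z) (\<lambda>f. \<nu> f - (\<Sum>i<(n::nat). b i * dirac z (q i) f)) < e/2"
    using free_space_approx[OF \<nu> half_gt_zero[OF e]] by blast
  define c where "c = (\<lambda>i. if i < m then a i else - b (i - m))"
  define r where "r = (\<lambda>i. if i < m then p i else q (i - m))"
  have "(\<lambda>f. \<mu> f - \<nu> f - (\<Sum>i<m + n. c i * dirac z (r i) f)) =
    (\<lambda>f. (\<mu> f - (\<Sum>i<m. a i * dirac z (p i) f)) - (\<nu> f - (\<Sum>i<n. b i * dirac z (q i) f)))"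
    unfolding c_def r_def sum_dirac_append by (simp add: algebra_simps)
  moreover have "dnorm_on (lip0 z)
      (\<lambda>f. (\<mu> f - (\<Sum>i<m. a i * dirac z (p i) f)) - (\<nu> f - (\<Sum>i<n. b i * dirac z (q i) f))) < e"
    using dnorm_on_diff_le[OF subset_refl lip0_zero
        bdd_lin_on_diff[OF subset_refl free_space_bdd_lin[OF \<mu>]
          bdd_lin_on_dirac_sum[where n = m and a = a and p = p]]
        bdd_lin_on_diff[OF subset_refl free_space_bdd_lin[OF \<nu>]
          bdd_lin_on_dirac_sum[where n = n and a = b and p = q]]] a b
    by linarith
  ultimately have "dnorm_on (lip0 z) (\<lambda>f. \<mu> f - \<nu> f - (\<Sum>i<m + n. c i * dirac z (r i) f)) < e"
    by simp
  then show "\<exists>(n::nat) c r. dnorm_on (lip0 z) (\<lambda>f. \<mu> f - \<nu> f - (\<Sum>i<n. c i * dirac z (r i) f)) < e"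
    by blast
qed

lemma free_space_zero_if_dnorm_zero:
  assumes \<rho>: "\<rho> \<in> free_space z" and d0: "dnorm_on (lip0 z) \<rho> = 0"
  shows "\<rho> f = 0"
proof (cases "f \<in> lip0 z")
  case False
  then show ?thesis using free_space_outside_lip0[OF \<rho>] by simp
next
  case True
  define c where "c = 1 / (lipnorm f + 1)"
  have c: "c > 0" "\<bar>c\<bar> * lipnorm f \<le> 1"
    using lipnorm_nonneg[OF True] by (auto simp: c_def field_simps)
  have "\<bar>\<rho> (\<lambda>x. c * f x)\<bar> \<le> 0"
    using dnorm_on_upper[OF subset_refl free_space_bdd_lin[OF \<rho>] lip0_lin[OF True True, of c 0]]
      lipnorm_cmult_le[OF True, of c] c(2) d0 by simp
  moreover have "\<rho> (\<lambda>x. c * f x + 0 * f x) = c * \<rho> f + 0 * \<rho> f"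
    using free_space_bdd_lin[OF \<rho>] True unfolding bdd_lin_on_def by blast
  ultimately show ?thesis using c(1) by simp
qed

lemma free_space_eq_if_eq_on_predual:
  assumes P: "isometric_predual z X" and \<mu>: "\<mu> \<in> free_space z" and \<nu>: "\<nu> \<in> free_space z"
    and eq: "\<forall>f\<in>X. \<mu> f = \<nu> f"
  shows "\<mu> = \<nu>"
proof -
  define \<rho> where "\<rho> = (\<lambda>f. \<mu> f - \<nu> f)"
  have \<rho>: "\<rho> \<in> free_space z" unfolding \<rho>_def by (rule free_space_diff[OF \<mu> \<nu>])
  have X0: "(\<lambda>x. 0) \<in> X" using P by (simp add: isometric_predual_def)
  have "lipnorm (\<lambda>x::'a. 0::real) \<le> 1" by (simp add: lipnorm_zero)
  with X0 eq have "{\<bar>\<rho> f\<bar> |f. f \<in> X \<and> lipnorm f \<le> 1} = {0}"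
    unfolding \<rho>_def by force
  then have "dnorm_on X \<rho> = 0" by (simp add: dnorm_on_def)
  with P \<rho> have "dnorm_on (lip0 z) \<rho> = 0" by (simp add: isometric_predual_def)
  then show ?thesis
    using free_space_zero_if_dnorm_zero[OF \<rho>] unfolding \<rho>_def by (auto simp: fun_eq_iff)
qed

lemma dirac_on_lip0: "f \<in> lip0 z \<Longrightarrow> dirac z x f = f x"
  by (simp add: dirac_def)

lemma inj_dirac: "inj (dirac z)"
proof (rule injI, rule ccontr)
  fix x y :: 'a
  assume eq: "dirac z x = dirac z y" and "x \<noteq> y"
  define g where "g t = dist t x - dist z x" for t
  have "1-lipschitz_on UNIV g"
  proof (rule lipschitz_onI)
    fix s t :: 'a
    show "dist (g s) (g t) \<le> 1 * dist s t"
      using abs_dist_diff_le[of s x t] by (simp add: g_def dist_real_def dist_commute)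
  qed simp
  then have "g \<in> lip0 z" by (auto simp: lip0_def g_def)
  with eq have "g x = g y" by (metis dirac_on_lip0)
  with \<open>x \<noteq> y\<close> show False by (simp add: g_def)
qed

lemma isometric_predual_separates_points:
  assumes P: "isometric_predual z X" and "x \<noteq> y"
  obtains f where "f \<in> X" "f x \<noteq> f y"
proof -
  have XL: "X \<subseteq> lip0 z" using P by (simp add: isometric_predual_def)
  have "dirac z x \<noteq> dirac z y" using inj_dirac \<open>x \<noteq> y\<close> by (metis injD)
  then have "\<exists>f\<in>X. dirac z x f \<noteq> dirac z y f"
    using free_space_eq_if_eq_on_predual[OF P dirac_in_free_space dirac_in_free_space] by blast
  with XL that show ?thesis using dirac_on_lip0 by (metis subsetD)
qed

section \<open>Pullbacks of product topologies\<close>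

lemma topology_generated_by_preimages_eq_pullback:
  fixes g :: "'i \<Rightarrow> 'b \<Rightarrow> real"
  assumes "I \<noteq> {}"
  shows "topology_generated_by {{x. g i x \<in> U} | i U. i \<in> I \<and> open U}
    = pullback_topology UNIV (\<lambda>x. restrict (\<lambda>i. g i x) I) (powertop_real I)"
    (is "?G = pullback_topology UNIV ?e ?R")
proof -
  obtain i0 where "i0 \<in> I" using assms by blast
  then have "UNIV \<in> {{x. g i x \<in> U} | i U. i \<in> I \<and> open U}" by force
  then have topG: "topspace ?G = UNIV" by auto
  have "continuous_map ?G euclideanreal (g i)" if "i \<in> I" for i
    unfolding continuous_map_openin_preimage_eq
  proof (intro conjI allI impI)
    show "g i \<in> topspace ?G \<rightarrow> topspace euclideanreal" by simp
    fix U :: "real set"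
    assume "openin euclideanreal U"
    with that have "{x. g i x \<in> U} \<in> {{x. g i x \<in> U} | i U. i \<in> I \<and> open U}" by auto
    then show "openin ?G (topspace ?G \<inter> g i -` U)"
      unfolding topG by (simp add: topology_generated_by_Basis vimage_def)
  qed
  then have cont: "continuous_map ?G ?R ?e"
    by (auto simp: continuous_map_componentwise)
  have basis: "openin (pullback_topology UNIV ?e ?R) B"
    if B_basic: "B \<in> {{x. g i x \<in> U} | i U. i \<in> I \<and> open U}" for B
  proof -
    obtain i U where "i \<in> I" "open U" and B: "B = {x. g i x \<in> U}" using B_basic by blast
    then have "openin ?R {\<psi> \<in> topspace ?R. \<psi> i \<in> U}"
      using openin_continuous_map_preimage[OF continuous_map_product_projection[OF \<open>i \<in> I\<close>,
          of "\<lambda>_. euclideanreal"], of U] by simp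
    moreover have "B = ?e -` {\<psi> \<in> topspace ?R. \<psi> i \<in> U} \<inter> UNIV"
      using \<open>i \<in> I\<close> by (auto simp: B)
    ultimately show ?thesis unfolding openin_pullback_topology by blast
  qed
  show ?thesis
    unfolding topology_eq
  proof (intro allI iffI)
    fix S
    assume "openin ?G S"
    then show "openin (pullback_topology UNIV ?e ?R) S"
      using generate_topology_on_coarsest[OF istopology_openin basis] openin_topology_generated_by
      by blast
  next
    fix S
    assume "openin (pullback_topology UNIV ?e ?R) S"
    then obtain V where V: "openin ?R V" and S: "S = ?e -` V \<inter> UNIV"
      unfolding openin_pullback_topology by blast
    have "openin ?G {x \<in> topspace ?G. ?e x \<in> V}"
      by (rule openin_continuous_map_preimage[OF cont V])
    then show "openin ?G S"
      unfolding topG S by (simp add: vimage_def)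
  qed
qed

lemma subtopology_pullback_topology:
  "subtopology (pullback_topology A f T) S = pullback_topology (A \<inter> S) f T"
  unfolding topology_eq openin_subtopology openin_pullback_topology
proof (intro allI iffI)
  fix W
  assume "\<exists>U. (\<exists>V. openin T V \<and> U = f -` V \<inter> A) \<and> W = U \<inter> S"
  then show "\<exists>V. openin T V \<and> W = f -` V \<inter> (A \<inter> S)" by (auto simp: Int_assoc)
next
  fix W
  assume "\<exists>V. openin T V \<and> W = f -` V \<inter> (A \<inter> S)"
  then obtain V where "openin T V" "W = f -` V \<inter> (A \<inter> S)" by blast
  then show "\<exists>U. (\<exists>V. openin T V \<and> U = f -` V \<inter> A) \<and> W = U \<inter> S"
    by (intro exI[of _ "f -` V \<inter> A"] conjI exI[of _ V]) auto
qed

lemma Hausdorff_space_pullback_topology: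
  assumes "Hausdorff_space T" "inj_on f A"
  shows "Hausdorff_space (pullback_topology A f T)"
  unfolding Hausdorff_space_def topspace_pullback_topology
proof (intro allI impI)
  fix x y
  assume xy: "x \<in> f -` topspace T \<inter> A \<and> y \<in> f -` topspace T \<inter> A \<and> x \<noteq> y"
  then have "f x \<noteq> f y" using assms(2) by (meson IntD2 inj_onD)
  with xy obtain U V where UV: "openin T U" "openin T V" "f x \<in> U" "f y \<in> V" "disjnt U V"
    using assms(1) unfolding Hausdorff_space_def by blast
  have "openin (pullback_topology A f T) (f -` U \<inter> A)" "openin (pullback_topology A f T) (f -` V \<inter> A)"
    using UV(1,2) by (auto simp: openin_pullback_topology)
  moreover have "disjnt (f -` U \<inter> A) (f -` V \<inter> A)"
    using UV(5) by (auto simp: disjnt_def)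
  ultimately show "\<exists>U V. openin (pullback_topology A f T) U \<and> openin (pullback_topology A f T) V \<and>
      x \<in> U \<and> y \<in> V \<and> disjnt U V"
    using UV(3,4) xy by blast
qed

lemma compact_space_pullback_topology:
  assumes "compactin T (f ` A)"
  shows "compact_space (pullback_topology A f T)"
  unfolding compact_space_def compactin_def
proof (intro conjI allI impI subset_refl)
  fix \<U>
  assume \<U>: "(\<forall>B\<in>\<U>. openin (pullback_topology A f T) B) \<and> topspace (pullback_topology A f T) \<subseteq> \<Union>\<U>"
  have top: "topspace (pullback_topology A f T) = A"
    using compactin_subset_topspace[OF assms] by (auto simp: topspace_pullback_topology)
  have "\<forall>B\<in>\<U>. \<exists>W. openin T W \<and> B = f -` W \<inter> A"
    using \<U> by (simp add: openin_pullback_topology)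
  from bchoice[OF this] obtain V where V: "\<forall>B\<in>\<U>. openin T (V B) \<and> B = f -` V B \<inter> A"
    by blast
  have "f ` A \<subseteq> \<Union>(V ` \<U>)"
  proof
    fix y
    assume "y \<in> f ` A"
    then obtain x where "x \<in> A" "y = f x" by blast
    with \<U> top obtain B where "B \<in> \<U>" "x \<in> B" by blast
    with V \<open>y = f x\<close> show "y \<in> \<Union>(V ` \<U>)" by blast
  qed
  moreover have "\<forall>W\<in>V ` \<U>. openin T W" using V by blast
  ultimately obtain \<F>' where "finite \<F>'" "\<F>' \<subseteq> V ` \<U>" "f ` A \<subseteq> \<Union>\<F>'"
    using assms unfolding compactin_def by meson
  then obtain \<F> where \<F>: "\<F> \<subseteq> \<U>" "finite \<F>" "f ` A \<subseteq> \<Union>(V ` \<F>)"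
    using finite_subset_image[of \<F>' V \<U>] by blast
  have "topspace (pullback_topology A f T) \<subseteq> \<Union>\<F>"
  proof
    fix x
    assume "x \<in> topspace (pullback_topology A f T)"
    with top \<F>(3) obtain B where "B \<in> \<F>" "f x \<in> V B" "x \<in> A" by blast
    with V \<F>(1) show "x \<in> \<Union>\<F>" by blast
  qed
  with \<F> show "\<exists>\<F>. finite \<F> \<and> \<F> \<subseteq> \<U> \<and> topspace (pullback_topology A f T) \<subseteq> \<Union>\<F>" by blast
qed

lemma closure_of_in_closed_preimage:
  assumes "continuous_map X euclideanreal h" "closed C" "h ` S \<subseteq> C" "x \<in> X closure_of S"
  shows "h x \<in> C"
proof -
  have "euclideanreal closure_of (h ` S) \<subseteq> C"
    using assms(2,3) by (intro closure_of_minimal) auto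
  then show ?thesis
    using continuous_map_image_closure_subset[OF assms(1)] assms(4) by blast
qed

section \<open>Weak topologies induced by the predual\<close>

definition evaluation_map :: "('a \<Rightarrow> real) set \<Rightarrow> 'a \<Rightarrow> ('a \<Rightarrow> real) \<Rightarrow> real" where
  "evaluation_map X x = restrict (\<lambda>f. f x) X"

lemma continuous_map_evaluation_map_iff:
  "continuous_map T (powertop_real X) (evaluation_map X) \<longleftrightarrow>
    (\<forall>f\<in>X. continuous_map T euclideanreal f)"
proof -
  have "continuous_map T euclideanreal (\<lambda>x. evaluation_map X x f) = continuous_map T euclideanreal f"
    if "f \<in> X" for f
    using that by (simp add: evaluation_map_def)
  then show ?thesis
    by (simp add: continuous_map_componentwise evaluation_map_def image_subset_iff)
qed

lemma restrict_dirac: "X \<subseteq> lip0 z \<Longrightarrow> restrict (dirac z x) X = evaluation_map X x"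
  by (auto simp: evaluation_map_def dirac_on_lip0 fun_eq_iff)

lemma weak_top_eq_pullback:
  assumes "X \<noteq> {}"
  shows "weak_top z X = pullback_topology (free_space z) (\<lambda>\<mu>. restrict \<mu> X) (powertop_real X)"
  using topology_generated_by_preimages_eq_pullback[OF assms, of "\<lambda>f \<mu>. \<mu> f"]
  unfolding weak_top_def by (simp add: subtopology_pullback_topology)

lemma topspace_weak_top: "X \<noteq> {} \<Longrightarrow> topspace (weak_top z X) = free_space z"
  by (auto simp: weak_top_eq_pullback topspace_pullback_topology)

lemma Hausdorff_space_weak_top:
  assumes P: "isometric_predual z X"
  shows "Hausdorff_space (weak_top z X)"
proof -
  have "X \<noteq> {}" using P by (auto simp: isometric_predual_def)
  have "inj_on (\<lambda>\<mu>. restrict \<mu> X) (free_space z)"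
  proof (rule inj_onI)
    fix \<mu> \<nu>
    assume "\<mu> \<in> free_space z" "\<nu> \<in> free_space z" "restrict \<mu> X = restrict \<nu> X"
    then show "\<mu> = \<nu>" by (intro free_space_eq_if_eq_on_predual[OF P]) (metis restrict_apply')+
  qed
  then show ?thesis
    unfolding weak_top_eq_pullback[OF \<open>X \<noteq> {}\<close>]
    by (intro Hausdorff_space_pullback_topology)
      (auto simp: Hausdorff_space_product_topology)
qed

lemma closedin_range_dirac_if_compact:
  assumes P: "isometric_predual z X"
    and T: "compact_space T" "topspace T = UNIV" "\<forall>f\<in>X. continuous_map T euclideanreal f"
  shows "closedin (weak_top z X) (range (dirac z))"
proof -
  have XL: "X \<subseteq> lip0 z" and "X \<noteq> {}" using P by (auto simp: isometric_predual_def)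
  have "(\<lambda>\<mu>. restrict \<mu> X) \<circ> dirac z = evaluation_map X"
    using restrict_dirac[OF XL] by (auto simp: fun_eq_iff)
  then have "continuous_map T (weak_top z X) (dirac z)"
    unfolding weak_top_eq_pullback[OF \<open>X \<noteq> {}\<close>]
    using T(3) dirac_in_free_space
    by (intro continuous_map_pullback') (auto simp: continuous_map_evaluation_map_iff)
  then have "compactin (weak_top z X) (range (dirac z))"
    using image_compactin T(1,2) unfolding compact_space_def by metis
  then show ?thesis by (rule compactin_imp_closedin[OF Hausdorff_space_weak_top[OF P]])
qed

lemma lip0_abs_le_uniform:
  fixes z :: "'a::metric_space"
  assumes "bounded (UNIV :: 'a set)"
  obtains d where "\<And>f x. f \<in> lip0 z \<Longrightarrow> \<bar>f x\<bar> \<le> d * lipnorm f"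
proof -
  obtain d where d: "\<And>y. dist z y \<le> d"
    using assms bounded_any_center[of UNIV z] by auto
  have "\<bar>f x\<bar> \<le> d * lipnorm f" if "f \<in> lip0 z" for f x
    using lip0_abs_le[OF that, of x] mult_left_mono[OF d[of x] lipnorm_nonneg[OF that]]
    by (simp add: dist_commute mult.commute)
  then show ?thesis by (rule that)
qed

lemma bdd_lin_on_closure_of_evaluations:
  fixes z :: "'a::metric_space" and X :: "('a \<Rightarrow> real) set"
  assumes "bounded (UNIV :: 'a set)" and XL: "X \<subseteq> lip0 z"
    and Xlin: "\<forall>f\<in>X. \<forall>g\<in>X. \<forall>a b. (\<lambda>x. a * f x + b * g x) \<in> X"
    and \<phi>: "\<phi> \<in> powertop_real X closure_of range (evaluation_map X)"
  shows "bdd_lin_on X \<phi>"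
proof -
  obtain d where d: "\<And>f x. f \<in> lip0 z \<Longrightarrow> \<bar>f x\<bar> \<le> d * lipnorm f"
    using lip0_abs_le_uniform[OF assms(1), where z = z] by blast
  have proj: "continuous_map (powertop_real X) euclideanreal (\<lambda>\<psi>. \<psi> f)" if "f \<in> X" for f
    using continuous_map_product_projection[OF that, of "\<lambda>_. euclideanreal"] by simp
  have E: "evaluation_map X x f = f x" if "f \<in> X" for f x
    using that by (simp add: evaluation_map_def)
  have "\<phi> (\<lambda>x. a * f x + b * g x) = a * \<phi> f + b * \<phi> g"
    if fg: "f \<in> X" "g \<in> X" for f g a b
  proof -
    define h where "h = (\<lambda>x. a * f x + b * g x)"
    have h: "h \<in> X" using Xlin fg unfolding h_def by blast
    have cont: "continuous_map (powertop_real X) euclideanreal (\<lambda>\<psi>. \<psi> h - (a * \<psi> f + b * \<psi> g))"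
      using fg h by (intro continuous_map_diff continuous_map_add continuous_map_real_mult_left proj)
    have "(\<lambda>\<psi>. \<psi> h - (a * \<psi> f + b * \<psi> g)) ` range (evaluation_map X) \<subseteq> {0}"
      using fg h by (auto simp: E h_def)
    from closure_of_in_closed_preimage[OF cont closed_singleton this \<phi>]
    show ?thesis unfolding h_def by simp
  qed
  moreover have "\<bar>\<phi> f\<bar> \<le> d * lipnorm f" if f: "f \<in> X" for f
  proof -
    have "(\<lambda>\<psi>. \<bar>\<psi> f\<bar>) ` range (evaluation_map X) \<subseteq> {..d * lipnorm f}"
      using d XL f by (auto simp: E)
    then show ?thesis
      using closure_of_in_closed_preimage[OF continuous_map_real_abs[OF proj[OF f]] closed_atMost _ \<phi>]
      by simp
  qed
  ultimately show ?thesis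
    unfolding bdd_lin_on_def by blast
qed

lemma closedin_range_evaluation_map:
  fixes z :: "'a::metric_space" and X :: "('a \<Rightarrow> real) set"
  assumes B: "bounded (UNIV :: 'a set)" and P: "isometric_predual z X"
    and cl: "closedin (weak_top z X) (range (dirac z))"
  shows "closedin (powertop_real X) (range (evaluation_map X))"
proof -
  have XL: "X \<subseteq> lip0 z" and "X \<noteq> {}"
    and Xlin: "\<forall>f\<in>X. \<forall>g\<in>X. \<forall>a b. (\<lambda>x. a * f x + b * g x) \<in> X"
    and ext: "\<forall>\<phi>. bdd_lin_on X \<phi> \<longrightarrow> (\<exists>\<mu>\<in>free_space z. \<forall>f\<in>X. \<mu> f = \<phi> f)"
    using P by (auto simp: isometric_predual_def)
  have "\<phi> \<in> range (evaluation_map X)"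
    if \<phi>: "\<phi> \<in> powertop_real X closure_of range (evaluation_map X)" for \<phi>
  proof -
    obtain \<mu> where \<mu>: "\<mu> \<in> free_space z" "\<forall>f\<in>X. \<mu> f = \<phi> f"
      using ext bdd_lin_on_closure_of_evaluations[OF B XL Xlin \<phi>] by blast
    have "\<phi> \<in> topspace (powertop_real X)" using subsetD[OF closure_of_subset_topspace \<phi>] .
    then have \<phi>_eq: "\<phi> = restrict \<mu> X"
      using \<mu>(2) by (auto simp: PiE_iff extensional_def fun_eq_iff)
    have "\<mu> \<in> range (dirac z)"
    proof (rule ccontr)
      assume "\<mu> \<notin> range (dirac z)"
      have "openin (weak_top z X) (free_space z - range (dirac z))"
        using cl by (simp add: closedin_def topspace_weak_top[OF \<open>X \<noteq> {}\<close>])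
      then obtain V where V: "openin (powertop_real X) V"
        "free_space z - range (dirac z) = (\<lambda>\<mu>. restrict \<mu> X) -` V \<inter> free_space z"
        unfolding weak_top_eq_pullback[OF \<open>X \<noteq> {}\<close>] openin_pullback_topology by blast
      with \<mu>(1) \<open>\<mu> \<notin> range (dirac z)\<close> \<phi>_eq have "\<phi> \<in> V" by blast
      with \<phi> V(1) obtain x where "evaluation_map X x \<in> V"
        unfolding in_closure_of by blast
      then have "dirac z x \<in> free_space z - range (dirac z)"
        using V(2) restrict_dirac[OF XL] dirac_in_free_space by auto
      then show False by blast
    qed
    then show ?thesis using \<phi>_eq restrict_dirac[OF XL] by auto
  qed
  then show ?thesis
    using closure_of_subset_eq[of "range (evaluation_map X)" "powertop_real X"]
    by (auto simp: evaluation_map_def)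
qed

lemma compactin_range_evaluation_map:
  fixes z :: "'a::metric_space" and X :: "('a \<Rightarrow> real) set"
  assumes "bounded (UNIV :: 'a set)" "X \<subseteq> lip0 z"
    and "closedin (powertop_real X) (range (evaluation_map X))"
  shows "compactin (powertop_real X) (range (evaluation_map X))"
proof -
  obtain d where d: "\<And>f x. f \<in> lip0 z \<Longrightarrow> \<bar>f x\<bar> \<le> d * lipnorm f"
    using lip0_abs_le_uniform[OF assms(1), where z = z] by blast
  have "compactin (powertop_real X) (\<Pi>\<^sub>E f\<in>X. cball 0 (d * lipnorm f))"
    by (simp add: compactin_PiE)
  moreover have "range (evaluation_map X) \<subseteq> (\<Pi>\<^sub>E f\<in>X. cball 0 (d * lipnorm f))"
    using d assms(2) by (auto simp: evaluation_map_def)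
  ultimately show ?thesis by (rule closed_compactin[OF _ _ assms(3)])
qed

lemma compact_Hausdorff_topology_if_closedin_range_dirac:
  fixes z :: "'a::metric_space" and X :: "('a \<Rightarrow> real) set"
  assumes B: "bounded (UNIV :: 'a set)" and P: "isometric_predual z X"
    and cl: "closedin (weak_top z X) (range (dirac z))"
  shows "\<exists>T :: 'a topology. topspace T = UNIV \<and> compact_space T \<and> Hausdorff_space T \<and>
            (\<forall>f\<in>X. continuous_map T euclideanreal f)"
proof (intro exI conjI)
  let ?T = "pullback_topology UNIV (evaluation_map X) (powertop_real X)"
  have XL: "X \<subseteq> lip0 z" using P by (simp add: isometric_predual_def)
  show "topspace ?T = UNIV"
    by (auto simp: topspace_pullback_topology evaluation_map_def)
  show "compact_space ?T"
    by (intro compact_space_pullback_topology compactin_range_evaluation_map[OF B XL]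
        closedin_range_evaluation_map[OF B P cl])
  have "inj (evaluation_map X)"
  proof (rule injI, rule ccontr)
    fix x y
    assume "evaluation_map X x = evaluation_map X y" "x \<noteq> y"
    moreover obtain f where "f \<in> X" "f x \<noteq> f y"
      using isometric_predual_separates_points[OF P \<open>x \<noteq> y\<close>] by blast
    ultimately show False by (metis evaluation_map_def restrict_apply')
  qed
  then show "Hausdorff_space ?T"
    by (intro Hausdorff_space_pullback_topology)
      (auto simp: Hausdorff_space_product_topology)
  have "continuous_map ?T (powertop_real X) (evaluation_map X)"
    using continuous_map_pullback[OF continuous_map_id] by (simp add: o_def)
  then show "\<forall>f\<in>X. continuous_map ?T euclideanreal f"
    by (simp add: continuous_map_evaluation_map_iff)
qed

theorem proposition3p2:
  fixes z :: "'a::metric_space" and X :: "('a \<Rightarrow> real) set"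
  assumes "bounded (UNIV :: 'a set)"
    and "isometric_predual z X"
  shows "(\<exists>T :: 'a topology. topspace T = UNIV \<and> compact_space T \<and> Hausdorff_space T \<and>
            (\<forall>f\<in>X. continuous_map T euclideanreal f))
         \<longleftrightarrow> closedin (weak_top z X) (range (dirac z))"
  using closedin_range_dirac_if_compact[OF assms(2)]
    compact_Hausdorff_topology_if_closedin_range_dirac[OF assms]
  by blast

end
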